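(* Let $D,\beta,\delta,\alpha\in\mathbb R$ with $\beta\ge0$ and $(D,\beta)\neq(0,0)$, and let $\lambda\in\mathbb C\setminus\sigma_{\mathrm{ess}}$, where $\sigma_{\mathrm{ess}}=\{(\delta\pm i\alpha)-s^2(\beta\pm i\frac D2): s\in\mathbb R\}$ (signs taken together). Let $\mathbf A_\infty(\lambda)=\begin{bmatrix}\mathbf 0&\mathbf I\\ \mathbf B^{-1}(\lambda\mathbf I-\mathbf N_0)&\mathbf 0\end{bmatrix}$ with $\mathbf B=\begin{bmatrix}\beta&-\frac D2\\ \frac D2&\beta\end{bmatrix}$, $\mathbf N_0=\begin{bmatrix}\delta&-\alpha\\ \alpha&\delta\end{bmatrix}$. Then exactly one of the following holds: (1) $\mathbf A_\infty(\lambda)$ has four distinct eigenvalues; (2) $(D,\alpha)=(0,0)$, and if $\lambda\in\mathbb R$ then $\lambda>\delta$; in this case $\mathbf A_\infty(\lambda)$ has two repeated eigenvalues $\pm\sqrt{(\lambda-\delta)/\beta}$; (3) $D\neq0$ and $\alpha/D<0$; in this case $\lambda=-\frac{2\alpha\beta}{D}+\delta$ and $\mathbf A_\infty(\lambda)$ has two repeated eigenvalues $\pm\sqrt{-2\alpha/D}=\pm\sqrt{(\lambda-\delta)/\beta}$.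
   Context: $\mathbf I,\mathbf 0$ denote the $2\times 2$ identity and zero matrices, so $\mathbf A_\infty(\lambda)\in\mathbb C^{4\times 4}$. *)

theory Defs
  imports "Jordan_Normal_Form.Jordan_Normal_Form" "Jordan_Normal_Form.Gauss_Jordan_Elimination"
begin

definition matB :: "real \<Rightarrow> real \<Rightarrow> complex mat" where
  "matB D \<beta> = mat_of_rows_list 2
     [[complex_of_real \<beta>, - complex_of_real (D/2)],
      [complex_of_real (D/2), complex_of_real \<beta>]]"

definition matN0 :: "real \<Rightarrow> real \<Rightarrow> complex mat" where
  "matN0 \<delta> \<alpha> = mat_of_rows_list 2
     [[complex_of_real \<delta>, - complex_of_real \<alpha>],
      [complex_of_real \<alpha>, complex_of_real \<delta>]]"

definition A_inf :: "real \<Rightarrow> real \<Rightarrow> real \<Rightarrow> real \<Rightarrow> complex \<Rightarrow> complex mat" where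
  "A_inf D \<beta> \<delta> \<alpha> lam = four_block_mat
     (0\<^sub>m 2 2) (1\<^sub>m 2)
     (the (mat_inverse (matB D \<beta>)) * (lam \<cdot>\<^sub>m 1\<^sub>m 2 - matN0 \<delta> \<alpha>)) (0\<^sub>m 2 2)"

definition sigma_ess :: "real \<Rightarrow> real \<Rightarrow> real \<Rightarrow> real \<Rightarrow> complex set" where
  "sigma_ess D \<beta> \<delta> \<alpha> = {\<mu>. \<exists>s::real.
      \<mu> = Complex \<delta> \<alpha> - complex_of_real (s^2) * Complex \<beta> (D/2) \<or>
      \<mu> = Complex \<delta> (-\<alpha>) - complex_of_real (s^2) * Complex \<beta> (-D/2)}"

end

theory Submission
  imports Defs
begin

text \<open>Both B and \<open>\<lambda>I - N\<^sub>0\<close> have the shape [[a, -b], [b, a]], so they are diagonalised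
  simultaneously by (1, -i) and (1, i). Hence \<open>B\<^sup>-\<^sup>1(\<lambda>I - N\<^sub>0)\<close> has the eigenvalues
  \<open>p\<^sub>\<plusminus> = (\<lambda> - (\<delta> \<plusminus> i\<alpha>)) / (\<beta> \<plusminus> iD/2)\<close>, and \<open>\<lambda>\<close> lies on the \<open>\<plusminus>\<close> branch of
  \<open>\<sigma>\<^sub>e\<^sub>s\<^sub>s\<close> exactly when \<open>p\<^sub>\<plusminus> = -s\<^sup>2\<close> for a real s. The characteristic polynomial of
  \<open>A\<^sub>\<infinity>(\<lambda>)\<close> is \<open>(X\<^sup>2 - p\<^sub>+)(X\<^sup>2 - p\<^sub>-)\<close>, so outside \<open>\<sigma>\<^sub>e\<^sub>s\<^sub>s\<close> its eigenvalues are the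
  square roots of two nonzero numbers: four distinct ones unless \<open>p\<^sub>+ = p\<^sub>-\<close>. That happens iff
  \<open>D(\<lambda> - \<delta>) + 2\<alpha>\<beta> = 0\<close>, i.e. D = \<alpha> = 0, or D \<noteq> 0 and \<open>\<lambda> = \<delta> - 2\<alpha>\<beta>/D\<close>.
  In each case the common value \<open>p\<^sub>\<plusminus>\<close> is real whenever \<open>\<lambda>\<close> is, and not being \<open>-s\<^sup>2\<close> it
  is then positive; this yields \<open>\<lambda> > \<delta>\<close> in case (2) and \<open>\<alpha>/D < 0\<close> in case (3).\<close>

abbreviation mat2 :: "'a \<Rightarrow> 'a \<Rightarrow> 'a \<Rightarrow> 'a \<Rightarrow> 'a mat" where
  "mat2 a b c d \<equiv> mat_of_rows_list 2 [[a, b], [c, d]]"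

lemma mat2_carrier: "mat2 a b c d \<in> carrier_mat 2 2"
proof -
  have "length [[a,b],[c,d]] = 2" by simp
  then show ?thesis unfolding mat_of_rows_list_def by (simp only: mat_carrier)
qed

lemma mat2_index:
  "mat2 a b c d $$ (0,0) = a" "mat2 a b c d $$ (0,1) = b"
  "mat2 a b c d $$ (1,0) = c" "mat2 a b c d $$ (1,1) = d"
  by (simp_all add: mat_of_rows_list_def)

lemma mat2_eq_iff: "mat2 a b c d = mat2 a' b' c' d' \<longleftrightarrow> a = a' \<and> b = b' \<and> c = c' \<and> d = d'"
  by (metis mat2_index)

lemma mat2_mult:
  "mat2 (a::'a::comm_ring_1) b c d * mat2 a' b' c' d' =
   mat2 (a*a' + b*c') (a*b' + b*d') (c*a' + d*c') (c*b' + d*d')"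
  by (rule eq_matI) (auto simp: mat_of_rows_list_def scalar_prod_def less_Suc_eq numeral_2_eq_2)

lemma one_mat_2: "1\<^sub>m 2 = mat2 (1::'a::comm_ring_1) 0 0 1"
  by (rule eq_matI) (auto simp: mat_of_rows_list_def less_Suc_eq numeral_2_eq_2)

lemma det_mat1:
  assumes "(A :: 'a :: comm_ring_1 mat) \<in> carrier_mat 1 1" shows "det A = A $$ (0,0)"
proof -
  have "mat_delete A 0 0 \<in> carrier_mat 0 0" using assms by (auto simp: mat_delete_def)
  then show ?thesis using laplace_expansion_row[OF assms, of 0] assms
    by (simp add: cofactor_def)
qed

lemma det_mat2: "det (mat2 (a::'a::comm_ring_1) b c d) = a * d - b * c"
proof -
  let ?A = "mat2 a b c d"
  have "det ?A = (\<Sum>j<2. ?A $$ (0,j) * cofactor ?A 0 j)"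
    using laplace_expansion_row[OF mat2_carrier, of 0] by simp
  also have "\<dots> = a * cofactor ?A 0 0 + b * cofactor ?A 0 1"
    by (simp add: numeral_2_eq_2 mat_of_rows_list_def)
  also have "cofactor ?A 0 0 = d"
    unfolding cofactor_def by (subst det_mat1) (auto simp: mat_delete_def mat_of_rows_list_def)
  also have "cofactor ?A 0 1 = - c"
    unfolding cofactor_def by (subst det_mat1) (auto simp: mat_delete_def mat_of_rows_list_def)
  finally show ?thesis by simp
qed

lemma char_poly_mat2:
  "char_poly (mat2 (a::'a::field_char_0) b c d) = [:a * d - b * c, - (a + d), 1:]"
proof (rule poly_eq_poly_eq_iff[THEN iffD1], rule ext)
  fix k :: 'a
  have "- char_matrix (mat2 a b c d) k = mat2 (k - a) (- b) (- c) (k - d)"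
    by (rule eq_matI) (auto simp: char_matrix_def mat_of_rows_list_def less_Suc_eq numeral_2_eq_2)
  then show "poly (char_poly (mat2 a b c d)) k = poly [:a * d - b * c, - (a + d), 1:] k"
    by (simp add: char_poly_matrix[OF mat2_carrier] det_mat2 algebra_simps)
qed

lemma char_matrix_four_block_zero_one:
  fixes M :: "'a::field mat"
  assumes M: "M \<in> carrier_mat n n"
  shows "- char_matrix (four_block_mat (0\<^sub>m n n) (1\<^sub>m n) M (0\<^sub>m n n)) k =
    four_block_mat (k \<cdot>\<^sub>m 1\<^sub>m n) (- 1\<^sub>m n) (- M) (k \<cdot>\<^sub>m 1\<^sub>m n)"
  by (rule eq_matI) (use M in \<open>simp add: char_matrix_def; arith\<close>)+

lemma char_poly_four_block_zero_one:
  fixes M :: "'a::field_char_0 mat"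
  assumes M: "M \<in> carrier_mat n n"
  shows "char_poly (four_block_mat (0\<^sub>m n n) (1\<^sub>m n) M (0\<^sub>m n n)) = char_poly M \<circ>\<^sub>p [:0, 0, 1:]"
proof (rule poly_eq_poly_eq_iff[THEN iffD1], rule ext)
  fix k :: 'a
  let ?A = "four_block_mat (0\<^sub>m n n) (1\<^sub>m n) M (0\<^sub>m n n)"
  let ?K = "k \<cdot>\<^sub>m 1\<^sub>m n"
  have A: "?A \<in> carrier_mat (n + n) (n + n)" using M by auto
  have "poly (char_poly ?A) k = det (four_block_mat ?K (- 1\<^sub>m n) (- M) ?K)"
    by (simp add: char_poly_matrix[OF A] char_matrix_four_block_zero_one[OF M])
  also have "\<dots> = det (?K * ?K - (- 1\<^sub>m n) * (- M))"
    by (rule det_four_block_mat) (use M in auto)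
  also have "?K * ?K = k \<cdot>\<^sub>m (1\<^sub>m n * ?K)"
    by (rule mult_smult_assoc_mat) auto
  also have "k \<cdot>\<^sub>m (1\<^sub>m n * ?K) - (- 1\<^sub>m n) * (- M) = (k * k) \<cdot>\<^sub>m 1\<^sub>m n - M"
    using M by (auto intro!: eq_matI)
  also have "\<dots> = - char_matrix M (k^2)"
    by (rule eq_matI) (use M in \<open>auto simp: char_matrix_def power2_eq_square\<close>)
  finally show "poly (char_poly ?A) k = poly (char_poly M \<circ>\<^sub>p [:0, 0, 1:]) k"
    by (simp add: poly_pcompose char_poly_matrix[OF M] power2_eq_square)
qed

lemma the_mat_inverse_eqI:
  fixes A B :: "'a::field mat"
  assumes "A \<in> carrier_mat n n" and "B \<in> carrier_mat n n"
    and "A * B = 1\<^sub>m n" and "B * A = 1\<^sub>m n"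
  shows "the (mat_inverse A) = B"
proof (cases "mat_inverse A")
  case None
  with mat_inverse(1)[OF assms(1), of undefined] assms show ?thesis
    by (auto simp: Units_def ring_mat_def)
next
  case (Some C)
  with mat_inverse(2)[OF assms(1)] have "A * C = 1\<^sub>m n" "C \<in> carrier_mat n n" by auto
  then have "B = B * (A * C)" using right_mult_one_mat[OF assms(2)] by simp
  also have "\<dots> = (B * A) * C" using assms(2,1) \<open>C \<in> carrier_mat n n\<close> by (rule assoc_mult_mat[symmetric])
  also have "\<dots> = C" using assms(4) left_mult_one_mat[OF \<open>C \<in> carrier_mat n n\<close>] by simp
  finally show ?thesis using Some by simp
qed

text \<open>\<open>rot_mat z w\<close> is the matrix [[a, -b], [b, a]] with a + ib = z and a - ib = w. It equals
  \<open>P diag(z, w) P\<^sup>-\<^sup>1\<close> for P = [[1, 1], [-i, i]], hence is multiplicative in (z, w) and has eigenvalues z, w.\<close>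

definition rot_mat :: "complex \<Rightarrow> complex \<Rightarrow> complex mat" where
  "rot_mat z w = mat2 ((z + w) / 2) (\<i> * (z - w) / 2) (- \<i> * (z - w) / 2) ((z + w) / 2)"

lemma rot_mat_carrier: "rot_mat z w \<in> carrier_mat 2 2"
  unfolding rot_mat_def by (rule mat2_carrier)

lemma rot_mat_mult: "rot_mat z w * rot_mat z' w' = rot_mat (z * z') (w * w')"
  unfolding rot_mat_def mat2_mult mat2_eq_iff
  by (simp add: field_simps)

lemma rot_mat_one: "rot_mat 1 1 = 1\<^sub>m 2"
  unfolding rot_mat_def one_mat_2 by simp

lemma the_mat_inverse_rot_mat:
  assumes "z \<noteq> 0" and "w \<noteq> 0"
  shows "the (mat_inverse (rot_mat z w)) = rot_mat (inverse z) (inverse w)"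
  by (rule the_mat_inverse_eqI[OF rot_mat_carrier rot_mat_carrier])
    (use assms in \<open>simp_all add: rot_mat_mult rot_mat_one[symmetric]\<close>)

lemma char_poly_rot_mat: "char_poly (rot_mat z w) = [:- z, 1:] * [:- w, 1:]"
  unfolding rot_mat_def char_poly_mat2 by (simp add: field_simps)

lemma complex_square_roots: "{\<mu>::complex. \<mu>^2 = p} = {csqrt p, - csqrt p}"
  by (auto simp: power2_eq_iff[of _ "csqrt p", simplified])

lemma card_complex_square_roots:
  fixes p :: complex
  assumes "p \<noteq> 0"
  shows "card {\<mu>. \<mu>^2 = p} = 2"
proof -
  have "csqrt p \<noteq> 0" using assms by (metis power2_csqrt power_zero_numeral)
  then have "csqrt p \<noteq> - csqrt p" by simp
  then show ?thesis unfolding complex_square_roots by simp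
qed

lemma card_complex_square_roots_Un:
  fixes p q :: complex
  assumes "p \<noteq> 0" and "q \<noteq> 0"
  shows "card ({\<mu>. \<mu>^2 = p} \<union> {\<mu>. \<mu>^2 = q}) = (if p = q then 2 else 4)"
proof (cases "p = q")
  case True
  then show ?thesis using card_complex_square_roots[OF assms(1)] by simp
next
  case False
  then have "{\<mu>. \<mu>^2 = p} \<inter> {\<mu>. \<mu>^2 = q} = {}" by auto
  then have "card ({\<mu>. \<mu>^2 = p} \<union> {\<mu>. \<mu>^2 = q}) = card {\<mu>. \<mu>^2 = p} + card {\<mu>. \<mu>^2 = q}"
    by (intro card_Un_disjoint) (simp_all add: complex_square_roots)
  then show ?thesis using False card_complex_square_roots assms by simp
qed

lemma order_root_X2_minus_squared:
  fixes p \<mu> :: complex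
  assumes "p \<noteq> 0" and "\<mu>^2 = p"
  shows "order \<mu> ([:- p, 0, 1:] * [:- p, 0, 1:]) = 2"
proof -
  have "\<mu> \<noteq> 0" using assms by auto
  have "[:- p, 0, 1:] = [:- \<mu>, 1:] * [:\<mu>, 1:]" using assms(2) by (simp add: power2_eq_square)
  then have "[:- p, 0, 1:] * [:- p, 0, 1:] = [:- \<mu>, 1:]^2 * [:\<mu>, 1:]^2"
    by (simp add: power2_eq_square algebra_simps)
  moreover have "order \<mu> ([:\<mu>, 1:]^2) = 0"
    by (rule order_0I) (use \<open>\<mu> \<noteq> 0\<close> in \<open>simp add: power2_eq_square\<close>)
  ultimately show ?thesis by (simp add: order_mult order_power_n_n)
qed

lemma Re_pos_if_not_neg_square:
  fixes p :: complex
  assumes "\<And>s::real. p \<noteq> - of_real (s^2)" and "p \<in> \<real>"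
  shows "Re p > 0"
proof (rule ccontr)
  assume "\<not> Re p > 0"
  then have "p = - of_real ((sqrt (- Re p))^2)" using \<open>p \<in> \<real>\<close>
    by (simp add: complex_eq_iff Reals_def)
  then show False using assms(1) by blast
qed

text \<open>The eigenvalue of \<open>B\<^sup>-\<^sup>1(\<lambda>I - N\<^sub>0)\<close> on (1, -i), i.e. the square of an eigenvalue of
  \<open>A_inf\<close>; flipping the signs of D and \<alpha> gives the one on (1, i).\<close>

definition sq_eigenvalue :: "real \<Rightarrow> real \<Rightarrow> real \<Rightarrow> real \<Rightarrow> complex \<Rightarrow> complex" where
  "sq_eigenvalue D \<beta> \<delta> \<alpha> lam = (lam - Complex \<delta> \<alpha>) / Complex \<beta> (D/2)"

lemma B_eigenvalues_nonzero:
  assumes "(D, \<beta>) \<noteq> (0, 0)"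
  shows "Complex \<beta> (D/2) \<noteq> 0" and "Complex \<beta> (-D/2) \<noteq> 0"
  using assms by (auto simp: complex_eq_iff)

lemma mem_sigma_ess_iff:
  assumes "(D, \<beta>) \<noteq> (0, 0)"
  shows "lam \<in> sigma_ess D \<beta> \<delta> \<alpha> \<longleftrightarrow> (\<exists>s::real.
    sq_eigenvalue D \<beta> \<delta> \<alpha> lam = - of_real (s^2) \<or> sq_eigenvalue (-D) \<beta> \<delta> (-\<alpha>) lam = - of_real (s^2))"
  using B_eigenvalues_nonzero[OF assms]
  unfolding sigma_ess_def sq_eigenvalue_def by (auto simp: divide_eq_eq algebra_simps)

lemma matB_eq_rot_mat: "matB D \<beta> = rot_mat (Complex \<beta> (D/2)) (Complex \<beta> (-D/2))"
  unfolding matB_def rot_mat_def mat2_eq_iff by (simp add: complex_eq_iff)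

lemma smult_one_minus_matN0:
  "lam \<cdot>\<^sub>m 1\<^sub>m 2 - matN0 \<delta> \<alpha> = rot_mat (lam - Complex \<delta> \<alpha>) (lam - Complex \<delta> (-\<alpha>))"
proof -
  have "lam \<cdot>\<^sub>m 1\<^sub>m 2 - matN0 \<delta> \<alpha> = mat2 (lam - of_real \<delta>) (of_real \<alpha>) (- of_real \<alpha>) (lam - of_real \<delta>)"
    by (rule eq_matI) (auto simp: matN0_def mat_of_rows_list_def less_Suc_eq numeral_2_eq_2)
  also have "\<dots> = rot_mat (lam - Complex \<delta> \<alpha>) (lam - Complex \<delta> (-\<alpha>))"
    unfolding rot_mat_def mat2_eq_iff by (simp add: Complex_eq field_simps)
  finally show ?thesis .
qed

lemma A_inf_eq_four_block:
  assumes "(D, \<beta>) \<noteq> (0, 0)"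
  shows "A_inf D \<beta> \<delta> \<alpha> lam = four_block_mat (0\<^sub>m 2 2) (1\<^sub>m 2)
    (rot_mat (sq_eigenvalue D \<beta> \<delta> \<alpha> lam) (sq_eigenvalue (-D) \<beta> \<delta> (-\<alpha>) lam)) (0\<^sub>m 2 2)"
proof -
  note nz = B_eigenvalues_nonzero[OF assms]
  have "the (mat_inverse (matB D \<beta>)) * (lam \<cdot>\<^sub>m 1\<^sub>m 2 - matN0 \<delta> \<alpha>) =
      rot_mat (inverse (Complex \<beta> (D/2)) * (lam - Complex \<delta> \<alpha>))
        (inverse (Complex \<beta> (-D/2)) * (lam - Complex \<delta> (-\<alpha>)))"
    by (simp only: matB_eq_rot_mat smult_one_minus_matN0 the_mat_inverse_rot_mat[OF nz] rot_mat_mult)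
  also have "\<dots> = rot_mat (sq_eigenvalue D \<beta> \<delta> \<alpha> lam) (sq_eigenvalue (-D) \<beta> \<delta> (-\<alpha>) lam)"
    by (simp only: sq_eigenvalue_def divide_inverse_commute)
  finally show ?thesis by (simp only: A_inf_def)
qed

lemma A_inf_carrier: "A_inf D \<beta> \<delta> \<alpha> lam \<in> carrier_mat 4 4"
  unfolding A_inf_def four_block_mat_def Let_def carrier_mat_def by simp

lemma char_poly_A_inf:
  assumes "(D, \<beta>) \<noteq> (0, 0)"
  shows "char_poly (A_inf D \<beta> \<delta> \<alpha> lam) =
    [:- sq_eigenvalue D \<beta> \<delta> \<alpha> lam, 0, 1:] * [:- sq_eigenvalue (-D) \<beta> \<delta> (-\<alpha>) lam, 0, 1:]"
  unfolding A_inf_eq_four_block[OF assms] char_poly_four_block_zero_one[OF rot_mat_carrier]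
    char_poly_rot_mat pcompose_mult by simp

lemma eigenvalue_A_inf_iff:
  assumes "(D, \<beta>) \<noteq> (0, 0)"
  shows "eigenvalue (A_inf D \<beta> \<delta> \<alpha> lam) \<mu> \<longleftrightarrow>
    \<mu>^2 = sq_eigenvalue D \<beta> \<delta> \<alpha> lam \<or> \<mu>^2 = sq_eigenvalue (-D) \<beta> \<delta> (-\<alpha>) lam"
proof -
  have "poly (char_poly (A_inf D \<beta> \<delta> \<alpha> lam)) \<mu> =
      (\<mu>^2 - sq_eigenvalue D \<beta> \<delta> \<alpha> lam) * (\<mu>^2 - sq_eigenvalue (-D) \<beta> \<delta> (-\<alpha>) lam)"
    unfolding char_poly_A_inf[OF assms] by (simp add: power2_eq_square algebra_simps)
  then show ?thesis by (simp add: eigenvalue_root_char_poly[OF A_inf_carrier])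
qed

lemma sq_eigenvalue_eq_iff:
  assumes "(D, \<beta>) \<noteq> (0, 0)"
  shows "sq_eigenvalue D \<beta> \<delta> \<alpha> lam = sq_eigenvalue (-D) \<beta> \<delta> (-\<alpha>) lam \<longleftrightarrow>
    (D = 0 \<and> \<alpha> = 0) \<or> (D \<noteq> 0 \<and> lam = of_real (- 2 * \<alpha> * \<beta> / D + \<delta>))"
proof -
  note nz = B_eigenvalues_nonzero[OF assms]
  have "(lam - Complex \<delta> \<alpha>) * Complex \<beta> (-D/2) - (lam - Complex \<delta> (-\<alpha>)) * Complex \<beta> (D/2) =
      - \<i> * (D * (lam - \<delta>) + 2 * \<alpha> * \<beta>)"
    by (simp add: Complex_eq field_simps)
  then have "sq_eigenvalue D \<beta> \<delta> \<alpha> lam = sq_eigenvalue (-D) \<beta> \<delta> (-\<alpha>) lam \<longleftrightarrow>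
      D * (lam - \<delta>) + 2 * \<alpha> * \<beta> = 0"
    unfolding sq_eigenvalue_def frac_eq_eq[OF nz] eq_iff_diff_eq_0[of "(lam - Complex \<delta> \<alpha>) * _"]
    by simp
  also have "\<dots> \<longleftrightarrow> (D = 0 \<and> \<alpha> = 0) \<or> (D \<noteq> 0 \<and> lam = of_real (- 2 * \<alpha> * \<beta> / D + \<delta>))"
    using assms by (cases "D = 0") (auto simp: field_simps)
  finally show ?thesis .
qed

lemma sq_eigenvalue_D_alpha_zero: "sq_eigenvalue 0 \<beta> \<delta> 0 lam = (lam - of_real \<delta>) / of_real \<beta>"
  by (simp add: sq_eigenvalue_def complex_of_real_def)

lemma sq_eigenvalue_at_repeated:
  assumes "D \<noteq> 0"
  shows "sq_eigenvalue D \<beta> \<delta> \<alpha> (of_real (- 2 * \<alpha> * \<beta> / D + \<delta>)) = of_real (- 2 * \<alpha> / D)"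
proof -
  have "of_real (- 2 * \<alpha> * \<beta> / D + \<delta>) - Complex \<delta> \<alpha> = of_real (- 2 * \<alpha> / D) * Complex \<beta> (D/2)"
    using assms by (simp add: Complex_eq field_simps)
  moreover have "Complex \<beta> (D/2) \<noteq> 0" using assms B_eigenvalues_nonzero(1)[of D \<beta>] by simp
  ultimately show ?thesis by (simp add: sq_eigenvalue_def)
qed

lemma Re_gt_if_not_mem_sigma_ess:
  assumes "\<beta> > 0" and "lam \<notin> sigma_ess 0 \<beta> \<delta> 0" and "lam \<in> \<real>"
  shows "Re lam > \<delta>"
proof -
  have "sq_eigenvalue 0 \<beta> \<delta> 0 lam \<noteq> - of_real (s^2)" for s :: real
    using assms(1,2) mem_sigma_ess_iff[of 0 \<beta>] by auto
  moreover have "sq_eigenvalue 0 \<beta> \<delta> 0 lam \<in> \<real>"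
    using assms(3) unfolding sq_eigenvalue_D_alpha_zero by auto
  ultimately have "Re ((lam - of_real \<delta>) / of_real \<beta>) > 0"
    unfolding sq_eigenvalue_D_alpha_zero by (rule Re_pos_if_not_neg_square)
  then show ?thesis using assms(1) by (simp add: Re_divide_of_real zero_less_divide_iff)
qed

lemma ratio_neg_if_not_mem_sigma_ess:
  assumes "D \<noteq> 0" and "of_real (- 2 * \<alpha> * \<beta> / D + \<delta>) \<notin> sigma_ess D \<beta> \<delta> \<alpha>"
  shows "\<alpha> / D < 0"
proof -
  have "sq_eigenvalue D \<beta> \<delta> \<alpha> (of_real (- 2 * \<alpha> * \<beta> / D + \<delta>)) \<noteq> - of_real (s^2)" for s :: real
    using assms mem_sigma_ess_iff[of D \<beta>] by auto
  then have "Re (of_real (- 2 * \<alpha> / D) :: complex) > 0"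
    unfolding sq_eigenvalue_at_repeated[OF assms(1)] by (rule Re_pos_if_not_neg_square) simp
  then show ?thesis by simp
qed

theorem proposition4p5:
  fixes D \<beta> \<delta> \<alpha> :: real and lam :: complex
  assumes "\<beta> \<ge> 0" and "(D, \<beta>) \<noteq> (0, 0)"
    and "lam \<notin> sigma_ess D \<beta> \<delta> \<alpha>"
  defines "A \<equiv> A_inf D \<beta> \<delta> \<alpha> lam"
  defines "C1 \<equiv> card {\<mu>. eigenvalue A \<mu>} = 4"
    and "C2 \<equiv> (D = 0 \<and> \<alpha> = 0 \<and> (lam \<in> \<real> \<longrightarrow> Re lam > \<delta>))"
    and "C3 \<equiv> (D \<noteq> 0 \<and> \<alpha> / D < 0 \<and> lam = of_real (- 2 * \<alpha> * \<beta> / D + \<delta>))"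
  shows "((C1 \<and> \<not> C2 \<and> \<not> C3) \<or> (\<not> C1 \<and> C2 \<and> \<not> C3) \<or> (\<not> C1 \<and> \<not> C2 \<and> C3)) \<and>
         (C2 \<longrightarrow>
           {\<mu>. eigenvalue A \<mu>} = {\<mu>. \<mu>^2 = (lam - of_real \<delta>) / of_real \<beta>} \<and>
           card {\<mu>. eigenvalue A \<mu>} = 2 \<and>
           (\<forall>\<mu>. eigenvalue A \<mu> \<longrightarrow> order \<mu> (char_poly A) = 2)) \<and>
         (C3 \<longrightarrow>
           {\<mu>. eigenvalue A \<mu>} = {\<mu>. \<mu>^2 = of_real (- 2 * \<alpha> / D)} \<and>
           (\<beta> \<noteq> 0 \<longrightarrow> of_real (- 2 * \<alpha> / D) = (lam - of_real \<delta>) / of_real \<beta>) \<and>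
           card {\<mu>. eigenvalue A \<mu>} = 2 \<and>
           (\<forall>\<mu>. eigenvalue A \<mu> \<longrightarrow> order \<mu> (char_poly A) = 2))"
proof -
  define p q where "p = sq_eigenvalue D \<beta> \<delta> \<alpha> lam" and "q = sq_eigenvalue (-D) \<beta> \<delta> (-\<alpha>) lam"
  have "p \<noteq> 0" "q \<noteq> 0"
    using assms(3) mem_sigma_ess_iff[OF assms(2)] unfolding p_def q_def
    by (metis add.inverse_neutral of_real_0 power_zero_numeral)+
  have cp: "char_poly A = [:- p, 0, 1:] * [:- q, 0, 1:]"
    unfolding A_def p_def q_def by (rule char_poly_A_inf[OF assms(2)])
  have eig: "{\<mu>. eigenvalue A \<mu>} = {\<mu>. \<mu>^2 = p} \<union> {\<mu>. \<mu>^2 = q}"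
    unfolding A_def p_def q_def eigenvalue_A_inf_iff[OF assms(2)] by blast
  have C2_iff: "C2 \<longleftrightarrow> D = 0 \<and> \<alpha> = 0"
    using assms(1-3) Re_gt_if_not_mem_sigma_ess[of \<beta> lam \<delta>] by (auto simp: C2_def)
  have C3_iff: "C3 \<longleftrightarrow> D \<noteq> 0 \<and> lam = of_real (- 2 * \<alpha> * \<beta> / D + \<delta>)"
    using assms(3) ratio_neg_if_not_mem_sigma_ess[of D \<alpha> \<beta> \<delta>] by (auto simp: C3_def)
  have repeated_iff: "p = q \<longleftrightarrow> C2 \<or> C3"
    unfolding p_def q_def sq_eigenvalue_eq_iff[OF assms(2)] C2_iff C3_iff ..
  have repeated: "{\<mu>. eigenvalue A \<mu>} = {\<mu>. \<mu>^2 = p} \<and> card {\<mu>. eigenvalue A \<mu>} = 2 \<and>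
      (\<forall>\<mu>. eigenvalue A \<mu> \<longrightarrow> order \<mu> (char_poly A) = 2)" if "p = q"
    using that eig cp card_complex_square_roots[OF \<open>p \<noteq> 0\<close>] order_root_X2_minus_squared[OF \<open>p \<noteq> 0\<close>]
    by auto
  have "C1 \<longleftrightarrow> p \<noteq> q"
    unfolding C1_def eig card_complex_square_roots_Un[OF \<open>p \<noteq> 0\<close> \<open>q \<noteq> 0\<close>] by simp
  moreover have "p = (lam - of_real \<delta>) / of_real \<beta>" if C2
    using that sq_eigenvalue_D_alpha_zero by (simp add: C2_def p_def)
  moreover have "p = of_real (- 2 * \<alpha> / D)" if C3
    using that sq_eigenvalue_at_repeated by (simp add: C3_def p_def)
  moreover have "\<beta> \<noteq> 0 \<longrightarrow> of_real (- 2 * \<alpha> / D) = (lam - of_real \<delta>) / of_real \<beta>" if C3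
    using that by (auto simp: C3_def field_simps)
  ultimately show ?thesis
    using repeated repeated_iff C2_iff C3_iff by metis
qed

end
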